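(* Assume the following two hypotheses. (Grimm's conjecture) For all integers $n\ge 1$ and $k\ge 1$ such that $n+1,\dots,n+k$ are all composite, there exist distinct primes $P_1,\dots,P_k$ with $P_i\mid (n+i)$ for $1\le i\le k$. (Smooth numbers in short intervals) For every $\varepsilon>0$ there is a constant $c_\varepsilon>0$ such that for all sufficiently large real $x$, $\Psi(x+x^{\varepsilon},x^{\varepsilon})-\Psi(x,x^{\varepsilon})\ge c_\varepsilon x^{\varepsilon}$. Then for every $\varepsilon>0$, $p_{i+1}-p_i<p_i^{\varepsilon}$ for all sufficiently large $i$.
   Context: $p_i$ denotes the $i$-th prime. For real $x,y$, $\Psi(x,y)$ denotes the number of positive integers $\le x$ all of whose prime factors are $\le y$. *)

theory Defs
  imports "HOL-Analysis.Analysis" "HOL-Computational_Algebra.Primes"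
begin

definition Psi :: "real \<Rightarrow> real \<Rightarrow> nat" where
  "Psi x y = card {m::nat. 1 \<le> m \<and> real m \<le> x \<and> (\<forall>p. prime p \<and> p dvd m \<longrightarrow> real p \<le> y)}"

text \<open>The i-th prime, 1-indexed: pr 1 = 2, pr 2 = 3, ...\<close>
definition pr :: "nat \<Rightarrow> nat" where
  "pr i = (THE p. prime p \<and> card {q::nat. prime q \<and> q \<le> p} = i)"

definition grimm_conjecture :: bool where
  "grimm_conjecture \<longleftrightarrow>
    (\<forall>n k::nat. n \<ge> 1 \<and> k \<ge> 1 \<and> (\<forall>i\<in>{1..k}. \<not> prime (n + i)) \<longrightarrow>
       (\<exists>P :: nat \<Rightarrow> nat. inj_on P {1..k} \<and> (\<forall>i\<in>{1..k}. prime (P i) \<and> P i dvd (n + i))))"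

definition smooth_short_intervals :: bool where
  "smooth_short_intervals \<longleftrightarrow>
    (\<forall>\<epsilon>::real. \<epsilon> > 0 \<longrightarrow> (\<exists>c>0. \<forall>\<^sub>F x in at_top.
       real (Psi (x + x powr \<epsilon>) (x powr \<epsilon>)) - real (Psi x (x powr \<epsilon>)) \<ge> c * x powr \<epsilon>))"

end

theory Submission
  imports Defs "HOL-Real_Asymp.Real_Asymp"
begin

text \<open>If consecutive primes \<open>p < q\<close> had \<open>q - p \<ge> p\<^sup>\<epsilon>\<close>, put \<open>\<delta> = min \<epsilon> 1 / 2\<close> and \<open>L = 2 p\<^sup>\<delta>\<close>.
  For fixed \<open>m \<ge> 4 / c\<close> and large \<open>p\<close> we have \<open>m L < p powr (2 \<delta>) \<le> p\<^sup>\<epsilon>\<close>, so the \<open>m\<close> consecutive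
  blocks \<open>(x, x + L]\<close> with \<open>x = p, p + L, \<dots>\<close> lie in \<open>(p, q)\<close>. As \<open>x \<le> 2 p\<close> gives \<open>x\<^sup>\<delta> \<le> L\<close>, the
  smooth-numbers hypothesis puts at least \<open>c p\<^sup>\<delta>\<close> integers without prime factors above \<open>L\<close> into
  each block, at least \<open>4 p\<^sup>\<delta>\<close> in total. All of them are composite, so Grimm's conjecture assigns
  them distinct prime divisors \<open>\<le> L\<close>, of which there are at most \<open>2 p\<^sup>\<delta>\<close>.\<close>

definition smooth :: "real \<Rightarrow> nat \<Rightarrow> bool" where
  "smooth y s \<longleftrightarrow> (\<forall>p. prime p \<and> p dvd s \<longrightarrow> real p \<le> y)"

definition smooth_between :: "real \<Rightarrow> real \<Rightarrow> real \<Rightarrow> nat set" where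
  "smooth_between a b y = {s. a < real s \<and> real s \<le> b \<and> smooth y s}"

lemma smooth_mono: "smooth y s \<Longrightarrow> y \<le> y' \<Longrightarrow> smooth y' s"
  unfolding smooth_def by (meson order_trans)

lemma finite_smooth_between [simp]: "finite (smooth_between a b y)"
  by (rule finite_subset[of _ "{..nat \<lfloor>b\<rfloor>}"]) (auto simp: smooth_between_def intro: le_nat_floor)

lemma smooth_between_mono:
  "a \<le> a' \<Longrightarrow> b' \<le> b \<Longrightarrow> y' \<le> y \<Longrightarrow> smooth_between a' b' y' \<subseteq> smooth_between a b y"
  unfolding smooth_between_def by (auto intro: smooth_mono)

lemma card_smooth_between_split:
  assumes "a \<le> b" "b \<le> c"
  shows "card (smooth_between a c y) = card (smooth_between a b y) + card (smooth_between b c y)"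
proof -
  have "smooth_between a c y = smooth_between a b y \<union> smooth_between b c y"
    using assms by (auto simp: smooth_between_def not_le)
  moreover have "smooth_between a b y \<inter> smooth_between b c y = {}"
    by (auto simp: smooth_between_def)
  ultimately show ?thesis by (simp add: card_Un_disjoint)
qed

lemma Psi_eq_card_smooth_between: "Psi x y = card (smooth_between 0 x y)"
  unfolding Psi_def smooth_between_def smooth_def
  by (simp add: Suc_le_eq)

lemma card_smooth_between_eq_Psi_diff:
  assumes "0 \<le> a" "a \<le> b"
  shows "real (card (smooth_between a b y)) = real (Psi b y) - real (Psi a y)"
  using card_smooth_between_split[OF assms, of y] by (simp add: Psi_eq_card_smooth_between)

lemma card_smooth_between_blocks:
  fixes \<delta> c X\<^sub>0 P :: real
  assumes short: "\<And>x. X\<^sub>0 \<le> x \<Longrightarrow> c * x powr \<delta> \<le> card (smooth_between x (x + x powr \<delta>) (x powr \<delta>))"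
    and \<delta>: "0 < \<delta>" "\<delta> \<le> 1" and "0 \<le> c" "X\<^sub>0 \<le> P" "0 < P"
    and fits: "real m * (2 * P powr \<delta>) \<le> P"
  shows "real m * c * P powr \<delta> \<le> card (smooth_between P (P + real m * (2 * P powr \<delta>)) (2 * P powr \<delta>))"
  using fits
proof (induction m)
  case 0
  then show ?case by simp
next
  case (Suc m)
  define L where "L = 2 * P powr \<delta>"
  define x where "x = P + real m * L"
  have L: "0 \<le> L" by (simp add: L_def)
  have "real (Suc m) * L \<le> P"
    using Suc.prems by (simp add: L_def)
  then have fits_m: "real m * L \<le> P" and "x + L \<le> 2 * P"
    using L by (simp_all add: x_def algebra_simps)
  then have "P \<le> x" "x \<le> 2 * P" using L by (auto simp: x_def)
  have "x powr \<delta> \<le> (2 * P) powr \<delta>"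
    using \<open>P \<le> x\<close> \<open>x \<le> 2 * P\<close> \<open>0 < P\<close> \<delta> by (intro powr_mono2) auto
  also have "\<dots> = 2 powr \<delta> * P powr \<delta>"
    using \<open>0 < P\<close> by (simp add: powr_mult)
  also have "\<dots> \<le> L"
    unfolding L_def using powr_mono[of \<delta> 1 2] \<delta> by (intro mult_right_mono) auto
  finally have "x powr \<delta> \<le> L" .
  have "c * P powr \<delta> \<le> c * x powr \<delta>"
    using \<open>P \<le> x\<close> \<open>0 < P\<close> \<delta> \<open>0 \<le> c\<close> by (intro mult_left_mono powr_mono2) auto
  also have "\<dots> \<le> card (smooth_between x (x + x powr \<delta>) (x powr \<delta>))"
    using short \<open>X\<^sub>0 \<le> P\<close> \<open>P \<le> x\<close> by simp
  also have "\<dots> \<le> card (smooth_between x (x + L) L)"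
    using \<open>x powr \<delta> \<le> L\<close> by (intro of_nat_mono card_mono finite_smooth_between smooth_between_mono) auto
  finally have block: "c * P powr \<delta> \<le> card (smooth_between x (x + L) L)" .
  have "real m * c * P powr \<delta> \<le> card (smooth_between P x L)"
    using Suc.IH fits_m by (simp add: L_def x_def)
  also have "\<dots> + c * P powr \<delta> \<le> card (smooth_between P x L) + card (smooth_between x (x + L) L)"
    using block by simp
  also have "\<dots> = card (smooth_between P (x + L) L)"
    using card_smooth_between_split[of P x "x + L"] \<open>P \<le> x\<close> L by simp
  finally show ?case
    by (simp add: L_def x_def algebra_simps)
qed

lemma grimm_card_smooth_le:
  assumes "grimm_conjecture" "1 \<le> n"
    and prime_free: "\<forall>r. n < r \<and> r < n' \<longrightarrow> \<not> prime r"
    and U: "U \<subseteq> {n<..<n'}" "\<forall>s\<in>U. smooth y s"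
  shows "card U \<le> nat \<lfloor>y\<rfloor>"
proof (cases "U = {}")
  case False
  define k where "k = n' - n - 1"
  have range: "n < s \<and> s < n'" if "s \<in> U" for s
    using U(1) that by auto
  then have k: "s - n \<in> {1..k}" if "s \<in> U" for s
    using that unfolding k_def by fastforce
  have "1 \<le> k"
    using k False by fastforce
  have "\<forall>i\<in>{1..k}. \<not> prime (n + i)"
    using prime_free unfolding k_def by auto
  then obtain P where P: "inj_on P {1..k}" "\<forall>i\<in>{1..k}. prime (P i) \<and> P i dvd n + i"
    using assms(1,2) \<open>1 \<le> k\<close> unfolding grimm_conjecture_def by blast
  have sub: "n + (s - n) = s" if "s \<in> U" for s
    using range[OF that] by simp
  have "inj_on (\<lambda>s. P (s - n)) U"
  proof (rule inj_onI)
    fix s t assume "s \<in> U" "t \<in> U" "P (s - n) = P (t - n)"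
    then show "s = t" using P(1) k sub by (metis inj_onD)
  qed
  moreover have "(\<lambda>s. P (s - n)) ` U \<subseteq> {1..nat \<lfloor>y\<rfloor>}"
  proof safe
    fix s assume "s \<in> U"
    then have "prime (P (s - n))" "P (s - n) dvd s"
      using P(2) k sub by metis+
    then have "real (P (s - n)) \<le> y"
      using U(2) \<open>s \<in> U\<close> unfolding smooth_def by blast
    then show "P (s - n) \<in> {1..nat \<lfloor>y\<rfloor>}"
      using prime_ge_1_nat[OF \<open>prime (P (s - n))\<close>] by (auto intro: le_nat_floor)
  qed
  ultimately have "card U \<le> card {1..nat \<lfloor>y\<rfloor>}"
    by (intro card_inj_on_le) auto
  then show ?thesis by simp
qed simp

definition consecutive_primes :: "nat \<Rightarrow> nat \<Rightarrow> bool" where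
  "consecutive_primes p q \<longleftrightarrow> prime p \<and> prime q \<and> p < q \<and> (\<forall>r. p < r \<and> r < q \<longrightarrow> \<not> prime r)"

lemma grimm_card_smooth_between_le:
  assumes "grimm_conjecture" "consecutive_primes p q" "b < real q"
  shows "card (smooth_between (real p) b y) \<le> nat \<lfloor>y\<rfloor>"
proof (rule grimm_card_smooth_le[OF assms(1)])
  show "1 \<le> p" "\<forall>r. p < r \<and> r < q \<longrightarrow> \<not> prime r"
    using assms(2) by (simp_all add: consecutive_primes_def Suc_le_eq prime_gt_0_nat)
  show "smooth_between (real p) b y \<subseteq> {p<..<q}"
    using assms(3) by (auto simp: smooth_between_def)
  show "\<forall>s\<in>smooth_between (real p) b y. smooth y s"
    by (simp add: smooth_between_def)
qed

lemma consecutive_prime_gap_lt: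
  fixes \<delta> \<epsilon> c X\<^sub>0 :: real
  assumes grimm: "grimm_conjecture"
    and short: "\<And>x. X\<^sub>0 \<le> x \<Longrightarrow> c * x powr \<delta> \<le> card (smooth_between x (x + x powr \<delta>) (x powr \<delta>))"
    and \<delta>: "0 < \<delta>" "2 * \<delta> \<le> \<epsilon>" "2 * \<delta> \<le> 1" and "0 < c" "4 \<le> real m * c"
    and P: "X\<^sub>0 \<le> real p" "1 \<le> real p" "2 * real m < real p powr \<delta>"
    and "consecutive_primes p q"
  shows "real q - real p < real p powr \<epsilon>"
proof (rule ccontr)
  assume "\<not> real q - real p < real p powr \<epsilon>"
  define P L where "P = real p" and "L = 2 * P powr \<delta>"
  have "real m * L = (2 * real m) * P powr \<delta>"
    by (simp add: L_def)
  also have "\<dots> < P powr \<delta> * P powr \<delta>"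
    using P by (intro mult_strict_right_mono) (auto simp: P_def)
  also have "\<dots> = P powr (2 * \<delta>)"
    by (simp add: P_def powr_add[symmetric])
  finally have "real m * L < P powr (2 * \<delta>)" .
  moreover have "P powr (2 * \<delta>) \<le> P powr \<epsilon>" "P powr (2 * \<delta>) \<le> P"
    using powr_mono[OF \<delta>(2), of P] powr_mono[OF \<delta>(3), of P] P by (simp_all add: P_def)
  ultimately have "real m * L < P powr \<epsilon>" "real m * L \<le> P"
    by linarith+
  define U where "U = smooth_between P (P + real m * L) L"
  have "card U \<le> nat \<lfloor>L\<rfloor>"
    unfolding U_def P_def
    using \<open>real m * L < P powr \<epsilon>\<close> \<open>\<not> real q - real p < real p powr \<epsilon>\<close>
    by (intro grimm_card_smooth_between_le[OF grimm \<open>consecutive_primes p q\<close>]) (simp add: P_def)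
  moreover have "0 \<le> L"
    by (simp add: L_def)
  ultimately have "real (card U) \<le> L"
    by linarith
  moreover have "real m * c * P powr \<delta> \<le> card U"
    unfolding U_def L_def
    using \<delta> \<open>0 < c\<close> P \<open>real m * L \<le> P\<close>
    by (intro card_smooth_between_blocks[OF short]) (auto simp: P_def L_def)
  moreover have "4 * P powr \<delta> \<le> real m * c * P powr \<delta>"
    using \<open>4 \<le> real m * c\<close> by (simp add: mult_right_mono)
  moreover have "0 < P powr \<delta>"
    using P by (simp add: P_def)
  ultimately show False
    unfolding L_def by linarith
qed

lemma eventually_consecutive_prime_gap_lt:
  assumes grimm: "grimm_conjecture" and short: "smooth_short_intervals" and "0 < \<epsilon>"
  shows "\<forall>\<^sub>F p in at_top. \<forall>q. consecutive_primes p q \<longrightarrow> real q - real p < real p powr \<epsilon>"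
proof -
  define \<delta> where "\<delta> = min \<epsilon> 1 / 2"
  have \<delta>: "0 < \<delta>" "2 * \<delta> \<le> \<epsilon>" "2 * \<delta> \<le> 1"
    unfolding \<delta>_def using \<open>0 < \<epsilon>\<close> by auto
  obtain c where "0 < c" and "\<forall>\<^sub>F x in at_top.
      c * x powr \<delta> \<le> real (Psi (x + x powr \<delta>) (x powr \<delta>)) - real (Psi x (x powr \<delta>))"
    using short \<open>0 < \<delta>\<close> unfolding smooth_short_intervals_def by blast
  then obtain X\<^sub>0 where "X\<^sub>0 \<ge> 0" and X\<^sub>0: "\<And>x. X\<^sub>0 \<le> x \<Longrightarrow>
      c * x powr \<delta> \<le> real (Psi (x + x powr \<delta>) (x powr \<delta>)) - real (Psi x (x powr \<delta>))"
    unfolding eventually_at_top_linorder by (metis max.cobounded1 max.cobounded2 order_trans)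
  have short_intervals: "c * x powr \<delta> \<le> card (smooth_between x (x + x powr \<delta>) (x powr \<delta>))" if "X\<^sub>0 \<le> x" for x
    using X\<^sub>0[OF that] that \<open>X\<^sub>0 \<ge> 0\<close> by (simp add: card_smooth_between_eq_Psi_diff)
  define m :: nat where "m = nat \<lceil>4 / c\<rceil>"
  have "4 / c \<le> real m"
    unfolding m_def by linarith
  then have "4 \<le> real m * c"
    using \<open>0 < c\<close> by (simp add: field_simps)
  have "\<forall>\<^sub>F p in at_top. 2 * real m < real p powr \<delta>"
    using \<open>0 < \<delta>\<close> by real_asymp
  moreover have "\<forall>\<^sub>F p in at_top. X\<^sub>0 \<le> real p" "\<forall>\<^sub>F p in at_top. 1 \<le> real p"
    by real_asymp+
  ultimately show ?thesis
    by eventually_elim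
      (use consecutive_prime_gap_lt[OF grimm short_intervals \<delta> \<open>0 < c\<close> \<open>4 \<le> real m * c\<close>] in blast)
qed

definition prime_pi :: "nat \<Rightarrow> nat" where
  "prime_pi n = card {q. prime q \<and> q \<le> n}"

lemma prime_pi_0 [simp]: "prime_pi 0 = 0"
proof -
  have "{q::nat. prime q \<and> q \<le> 0} = {}"
    by auto
  then show ?thesis
    by (simp add: prime_pi_def)
qed

lemma prime_pi_Suc: "prime_pi (Suc n) = prime_pi n + (if prime (Suc n) then 1 else 0)"
proof -
  have "{q. prime q \<and> q \<le> Suc n} = {q. prime q \<and> q \<le> n} \<union> (if prime (Suc n) then {Suc n} else {})"
    by (auto simp: le_Suc_eq)
  then show ?thesis
    by (simp add: prime_pi_def)
qed

lemma prime_pi_mono: "m \<le> n \<Longrightarrow> prime_pi m \<le> prime_pi n"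
  unfolding prime_pi_def by (rule card_mono) auto

lemma prime_pi_le: "prime_pi n \<le> n"
proof -
  have "{q. prime q \<and> q \<le> n} \<subseteq> {1..n}"
    using prime_ge_1_nat by auto
  then show ?thesis
    unfolding prime_pi_def using card_mono[of "{1..n}"] by fastforce
qed

lemma prime_pi_strict_mono_prime:
  assumes "prime q" "p < q"
  shows "prime_pi p < prime_pi q"
proof -
  obtain n where "q = Suc n"
    using assms(2) by (cases q) auto
  then show ?thesis
    using prime_pi_mono[of p n] prime_pi_Suc[of n] assms by simp
qed

lemma prime_pi_unbounded: "\<exists>n. i \<le> prime_pi n"
proof (induction i)
  case (Suc i)
  then obtain n where "i \<le> prime_pi n" by blast
  moreover obtain q where "prime q" "n < q"
    using bigger_prime by blast
  ultimately show ?case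
    using prime_pi_strict_mono_prime[of q n] by (intro exI[of _ q]) simp
qed simp

text \<open>The least \<open>n\<close> with \<open>i \<le> prime_pi n\<close> is prime, since \<open>prime_pi\<close> only increases at primes.\<close>

lemma ex_prime_pi_eq:
  assumes "1 \<le> i"
  shows "\<exists>p. prime p \<and> prime_pi p = i"
proof -
  define n where "n = (LEAST n. i \<le> prime_pi n)"
  have "i \<le> prime_pi n"
    unfolding n_def using prime_pi_unbounded by (rule LeastI_ex)
  moreover have "n \<noteq> 0"
    using \<open>i \<le> prime_pi n\<close> assms by (cases n) auto
  then obtain n' where "n = Suc n'"
    using not0_implies_Suc by blast
  moreover have "\<not> i \<le> prime_pi n'"
    using not_less_Least[of n' "\<lambda>n. i \<le> prime_pi n"] \<open>n = Suc n'\<close> unfolding n_def by simp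
  ultimately show ?thesis
    using prime_pi_Suc[of n'] by (intro exI[of _ n]) (auto split: if_splits)
qed

lemma prime_pr_and_prime_pi_pr:
  assumes "1 \<le> i"
  shows "prime (pr i) \<and> prime_pi (pr i) = i"
proof -
  obtain p where p: "prime p" "prime_pi p = i"
    using ex_prime_pi_eq[OF assms] by blast
  have "pr i = p"
    unfolding pr_def
  proof (rule the_equality)
    show "prime p \<and> card {q. prime q \<and> q \<le> p} = i"
      using p by (simp add: prime_pi_def)
  next
    fix p' :: nat
    assume "prime p' \<and> card {q. prime q \<and> q \<le> p'} = i"
    then have "prime p'" "prime_pi p' = i"
      by (simp_all add: prime_pi_def)
    then show "p' = p"
      using p prime_pi_strict_mono_prime[of p p'] prime_pi_strict_mono_prime[of p' p]
      by (cases p p' rule: linorder_cases) auto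
  qed
  then show ?thesis
    using p by simp
qed

lemma le_pr: "1 \<le> i \<Longrightarrow> i \<le> pr i"
  using prime_pr_and_prime_pi_pr prime_pi_le by metis

lemma consecutive_primes_pr:
  assumes "1 \<le> i"
  shows "consecutive_primes (pr i) (pr (i + 1))"
proof -
  have i: "prime (pr i)" "prime_pi (pr i) = i"
    and Si: "prime (pr (i + 1))" "prime_pi (pr (i + 1)) = i + 1"
    using prime_pr_and_prime_pi_pr assms by auto
  have "pr i < pr (i + 1)"
    using prime_pi_mono[of "pr (i + 1)" "pr i"] i Si by linarith
  moreover have "\<not> prime r" if "pr i < r" "r < pr (i + 1)" for r
    using prime_pi_strict_mono_prime[of r "pr i"] prime_pi_strict_mono_prime[OF Si(1) that(2)] i Si that
    by auto
  ultimately show ?thesis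
    using i Si by (simp add: consecutive_primes_def)
qed

theorem corollary1p1:
  assumes "grimm_conjecture"
    and "smooth_short_intervals"
  shows "\<forall>\<epsilon>::real. \<epsilon> > 0 \<longrightarrow>
           (\<forall>\<^sub>F i in at_top. real (pr (i + 1)) - real (pr i) < real (pr i) powr \<epsilon>)"
proof (intro allI impI)
  fix \<epsilon> :: real
  assume "\<epsilon> > 0"
  have "filterlim pr at_top at_top"
    using filterlim_ident eventually_mono[OF eventually_ge_at_top[of 1] le_pr]
    by (rule filterlim_at_top_mono)
  with eventually_consecutive_prime_gap_lt[OF assms \<open>\<epsilon> > 0\<close>]
  have "\<forall>\<^sub>F i in at_top. \<forall>q. consecutive_primes (pr i) q \<longrightarrow> real q - real (pr i) < real (pr i) powr \<epsilon>"
    by (rule eventually_compose_filterlim)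
  moreover have "\<forall>\<^sub>F i in at_top. consecutive_primes (pr i) (pr (i + 1))"
    using eventually_ge_at_top[of 1] by eventually_elim (rule consecutive_primes_pr)
  ultimately show "\<forall>\<^sub>F i in at_top. real (pr (i + 1)) - real (pr i) < real (pr i) powr \<epsilon>"
    by eventually_elim blast
qed

end
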